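(* Let $m\ge 1$ and $\theta\in(0,1]$. In the expected normalized profile $\hat P$, candidate $1$ is a Super Condorcet Winner; moreover there is a neighborhood of $\hat P$ (among continuous profiles of total weight $1$, topology of weight vectors in $\mathbb R^{m!}$) in every profile of which candidate $1$ is a Super Condorcet Winner. In particular IRV elects $1$ and is not CM in every profile of this neighborhood.
   Context: A ranking is a strict total order on $\{1,\dots,m\}$. A continuous profile consists of the candidate set, total weight $w(P)>0$ and weights $w(p,P)\ge0$ summing to $w(P)$. For $K\subseteq\{1,\dots,m\}$, $P_K$ restricts each ranking to $K$. Plurality score $s_{\mathrm{Plu}}(c,P)$: total weight of rankings placing $c$ first. Super Condorcet Winner: $c$ is an SCW in $P$ if $s_{\mathrm{Plu}}(c,P_K)>\frac{w(P)}{|K|}$ for every $K\ni c$. IRV: repeatedly eliminate a candidate with minimal Plurality score among remaining candidates (ties broken by a fixed rule), the last remaining candidate wins. CM (continuous): a rule $f$ is CM in $P$ if there is a continuous $Q$ with the same candidates and total weight, $f(Q)\ne f(P)$, and every ranking $p$ with $w(p,Q)<w(p,P)$ prefers $f(Q)$ to $f(P)$. Expected normalized profile $\hat P$: total weight $1$, weight $\theta+\frac{1-\theta}{m!}$ on $1\succ\cdots\succ m$ and $\frac{1-\theta}{m!}$ on each other ranking. *)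

theory Defs
  imports Complex_Main
begin

text \<open>Candidates are 1..m; a ranking is a list enumerating {1..m} without repetition,
  the head being the most preferred candidate.\<close>
definition rankings :: "nat \<Rightarrow> nat list set" where
  "rankings m = {p. distinct p \<and> set p = {1..m}}"

text \<open>A continuous profile: nonnegative weights on the rankings
  (values outside rankings are irrelevant and never used).\<close>
definition is_profile :: "nat \<Rightarrow> (nat list \<Rightarrow> real) \<Rightarrow> bool" where
  "is_profile m w \<longleftrightarrow> (\<forall>p\<in>rankings m. 0 \<le> w p)"

definition total :: "nat \<Rightarrow> (nat list \<Rightarrow> real) \<Rightarrow> real" where
  "total m w = (\<Sum>p\<in>rankings m. w p)"

definition top_in :: "nat set \<Rightarrow> nat list \<Rightarrow> nat" where
  "top_in K p = hd (filter (\<lambda>x. x \<in> K) p)"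

definition plu :: "nat \<Rightarrow> (nat list \<Rightarrow> real) \<Rightarrow> nat set \<Rightarrow> nat \<Rightarrow> real" where
  "plu m w K c = (\<Sum>p\<in>{p\<in>rankings m. top_in K p = c}. w p)"

text \<open>Super Condorcet Winner (subsets K with at least two candidates; for |K| = 1
  the condition would be unsatisfiable).\<close>
definition SCW :: "nat \<Rightarrow> (nat list \<Rightarrow> real) \<Rightarrow> nat \<Rightarrow> bool" where
  "SCW m w c \<longleftrightarrow> c \<in> {1..m} \<and>
     (\<forall>K. K \<subseteq> {1..m} \<and> c \<in> K \<and> 2 \<le> card K \<longrightarrow> plu m w K c > total m w / real (card K))"

definition tie_rule :: "(nat set \<Rightarrow> nat set \<Rightarrow> nat) \<Rightarrow> bool" where
  "tie_rule sel \<longleftrightarrow> (\<forall>R T. finite T \<and> T \<noteq> {} \<longrightarrow> sel R T \<in> T)"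

definition irv_step :: "nat \<Rightarrow> (nat set \<Rightarrow> nat set \<Rightarrow> nat) \<Rightarrow> (nat list \<Rightarrow> real) \<Rightarrow> nat set \<Rightarrow> nat set" where
  "irv_step m sel w R = R - {sel R {c\<in>R. \<forall>d\<in>R. plu m w R c \<le> plu m w R d}}"

definition IRV :: "nat \<Rightarrow> (nat set \<Rightarrow> nat set \<Rightarrow> nat) \<Rightarrow> (nat list \<Rightarrow> real) \<Rightarrow> nat" where
  "IRV m sel w = the_elem ((irv_step m sel w ^^ (m - 1)) {1..m})"

definition prefers :: "nat list \<Rightarrow> nat \<Rightarrow> nat \<Rightarrow> bool" where
  "prefers p a b \<longleftrightarrow> (\<exists>i j. i < j \<and> j < length p \<and> p ! i = a \<and> p ! j = b)"

definition CM :: "nat \<Rightarrow> ((nat list \<Rightarrow> real) \<Rightarrow> nat) \<Rightarrow> (nat list \<Rightarrow> real) \<Rightarrow> bool" where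
  "CM m f w \<longleftrightarrow> (\<exists>Q. is_profile m Q \<and> total m Q = total m w \<and> f Q \<noteq> f w \<and>
      (\<forall>p\<in>rankings m. Q p < w p \<longrightarrow> prefers p (f Q) (f w)))"

definition Phat :: "nat \<Rightarrow> real \<Rightarrow> nat list \<Rightarrow> real" where
  "Phat m \<theta> p = (if p = [1..<m+1] then \<theta> + (1 - \<theta>) / fact m else (1 - \<theta>) / fact m)"

end

theory Submission
  imports Defs "HOL-Combinatorics.Multiset_Permutations" "HOL-Combinatorics.Transposition"
begin

text \<open>By the symmetry of the uniform part, exactly m!/|K| rankings put a given candidate of K
  on top of K, so in \<open>Phat\<close> candidate 1 has Plurality score (1 - \<theta>)/|K| + \<theta> in \<open>P\<^sub>K\<close>, which
  beats 1/|K| by the margin \<theta>(1 - 1/|K|) \<ge> \<theta>/2. Moving every weight by less than \<theta>/(2 m!)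
  costs at most \<theta>/(2|K|) of that score, so candidate 1 remains a Super Condorcet Winner.
  A Super Condorcet Winner c is never a Plurality loser of a set of remaining candidates
  (its score exceeds the average), so IRV elects c. If a coalition made IRV elect d \<noteq> c, then
  c was eliminated from some set R containing d, with score at most the average in R and
  hence below its original score in \<open>P\<^sub>R\<close>; some voter ranking c first in R lowered their
  weight although they prefer c to d.\<close>

lemma rankings_eq_permutations_of_set: "rankings m = permutations_of_set {1..m}"
  unfolding rankings_def permutations_of_set_def by auto

lemma finite_rankings: "finite (rankings m)"
  by (simp add: rankings_eq_permutations_of_set)

lemma card_rankings: "card (rankings m) = fact m"
  by (simp add: rankings_eq_permutations_of_set)

lemma top_in_mem:
  assumes "p \<in> rankings m" "K \<subseteq> {1..m}" "K \<noteq> {}"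
  shows "top_in K p \<in> K"
proof -
  have "filter (\<lambda>x. x \<in> K) p \<noteq> []"
    using assms unfolding rankings_def by (auto simp: filter_empty_conv)
  then show ?thesis
    unfolding top_in_def using hd_in_set by fastforce
qed

lemma top_in_not_preferred:
  assumes "distinct p" "top_in K p = c" "d \<in> K"
  shows "\<not> prefers p d c"
proof
  assume "prefers p d c"
  then obtain i j where ij: "i < j" "j < length p" "p ! i = d" "p ! j = c"
    unfolding prefers_def by blast
  have "d \<in> set p" using ij by auto
  then have "filter (\<lambda>x. x \<in> K) p \<noteq> []" using assms(3) by (auto simp: filter_empty_conv)
  then have "filter (\<lambda>x. x \<in> K) p = c # tl (filter (\<lambda>x. x \<in> K) p)"
    using assms(2) unfolding top_in_def by (metis list.collapse)
  then obtain us vs where p: "p = us @ c # vs" and us: "\<forall>u\<in>set us. u \<notin> K"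
    by (blast dest: filter_eq_ConsD)
  have "p ! length us = c" by (simp add: p)
  then have "j = length us"
    using ij assms(1) nth_eq_iff_index_eq[of p j "length us"] by (simp add: p)
  then have "d \<in> set us" using ij by (auto simp: p nth_append)
  then show False using us assms(3) by blast
qed

lemma sum_plu:
  assumes "K \<subseteq> {1..m}" "K \<noteq> {}"
  shows "(\<Sum>c\<in>K. plu m w K c) = total m w"
  unfolding plu_def total_def
  by (rule sum.group[OF finite_rankings finite_subset[OF assms(1)]]) (use top_in_mem assms in auto)

definition plu_minimizers :: "nat \<Rightarrow> (nat list \<Rightarrow> real) \<Rightarrow> nat set \<Rightarrow> nat set" where
  "plu_minimizers m w R = {c\<in>R. \<forall>d\<in>R. plu m w R c \<le> plu m w R d}"

lemma plu_minimizers_nonempty: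
  assumes "finite R" "R \<noteq> {}"
  shows "plu_minimizers m w R \<noteq> {}"
  using arg_min_if_finite(1)[OF assms, of "plu m w R"] arg_min_least[OF assms, of _ "plu m w R"]
  unfolding plu_minimizers_def by blast

lemma card_mult_plu_minimizer_le_total:
  assumes "K \<subseteq> {1..m}" "c \<in> plu_minimizers m w K"
  shows "real (card K) * plu m w K c \<le> total m w"
proof -
  have "real (card K) * plu m w K c = (\<Sum>d\<in>K. plu m w K c)" by simp
  also have "\<dots> \<le> (\<Sum>d\<in>K. plu m w K d)"
    using assms(2) unfolding plu_minimizers_def by (intro sum_mono) blast
  also have "\<dots> = total m w"
    using assms sum_plu unfolding plu_minimizers_def by blast
  finally show ?thesis .
qed

lemma SCW_not_plu_minimizer:
  assumes "SCW m w c" "K \<subseteq> {1..m}" "2 \<le> card K"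
  shows "c \<notin> plu_minimizers m w K"
proof
  assume min: "c \<in> plu_minimizers m w K"
  then have "plu m w K c > total m w / real (card K)"
    using assms unfolding SCW_def plu_minimizers_def by blast
  then show False
    using card_mult_plu_minimizer_le_total[OF assms(2) min] assms(3)
    by (simp add: field_simps)
qed

lemma irv_step_eq: "irv_step m sel w R = R - {sel R (plu_minimizers m w R)}"
  unfolding irv_step_def plu_minimizers_def ..

lemma irv_step_eliminates_plu_minimizer:
  assumes "tie_rule sel" "finite R" "R \<noteq> {}"
  shows "sel R (plu_minimizers m w R) \<in> plu_minimizers m w R"
proof -
  have "finite (plu_minimizers m w R)" using assms(2) by (simp add: plu_minimizers_def)
  then show ?thesis
    using assms(1) plu_minimizers_nonempty[OF assms(2,3)] unfolding tie_rule_def by simp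
qed

lemma irv_rounds_antimono:
  assumes "j \<le> k"
  shows "(irv_step m sel w ^^ k) R \<subseteq> (irv_step m sel w ^^ j) R"
  by (rule lift_Suc_antimono_le[OF _ assms]) (auto simp: irv_step_def)

lemma card_irv_rounds:
  assumes "tie_rule sel" "j \<le> m - 1"
  shows "card ((irv_step m sel w ^^ j) {1..m}) = m - j"
  using assms(2)
proof (induction j)
  case 0
  then show ?case by simp
next
  case (Suc j)
  let ?R = "(irv_step m sel w ^^ j) {1..m}"
  have "?R \<subseteq> {1..m}" using irv_rounds_antimono[of 0 j] by simp
  then have "finite ?R" by (rule finite_subset) simp
  moreover have "card ?R = m - j" using Suc by simp
  moreover from this have "?R \<noteq> {}" using Suc.prems by auto
  ultimately have "sel ?R (plu_minimizers m w ?R) \<in> ?R"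
    using irv_step_eliminates_plu_minimizer[OF assms(1)] unfolding plu_minimizers_def by blast
  then have "card (irv_step m sel w ?R) = card ?R - 1"
    unfolding irv_step_eq[of m sel w ?R] using \<open>finite ?R\<close> by simp
  then show ?case using \<open>card ?R = m - j\<close> by simp
qed

lemma IRV_final_round:
  assumes "tie_rule sel" "1 \<le> m"
  shows "(irv_step m sel w ^^ (m - 1)) {1..m} = {IRV m sel w}"
proof -
  have "card ((irv_step m sel w ^^ (m - 1)) {1..m}) = 1"
    using card_irv_rounds[OF assms(1), of "m - 1"] assms(2) by simp
  then obtain x where "(irv_step m sel w ^^ (m - 1)) {1..m} = {x}" by (rule card_1_singletonE)
  then show ?thesis unfolding IRV_def by simp
qed

lemma IRV_eliminates:
  assumes sel: "tie_rule sel" and c: "c \<in> {1..m}" and lost: "IRV m sel w \<noteq> c"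
  obtains R where "R \<subseteq> {1..m}" "2 \<le> card R" "IRV m sel w \<in> R" "c \<in> plu_minimizers m w R"
proof -
  define R where "R j = (irv_step m sel w ^^ j) {1..m}" for j
  have m: "1 \<le> m" using c by simp
  have "c \<notin> R (m - 1)" using IRV_final_round[OF sel m] lost unfolding R_def by simp
  then obtain j where j: "j < m - 1" "c \<in> R j" "c \<notin> R (Suc j)"
    using ex_least_nat_less[of "\<lambda>j. c \<notin> R j"] c unfolding R_def by auto
  have "R j \<subseteq> {1..m}" using irv_rounds_antimono[of 0 j] unfolding R_def by simp
  moreover have "2 \<le> card (R j)" using card_irv_rounds[OF sel, of j] j unfolding R_def by simp
  moreover have "IRV m sel w \<in> R j"
    using irv_rounds_antimono[of j "m - 1" m sel w "{1..m}"] IRV_final_round[OF sel m] j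
    unfolding R_def by auto
  moreover have "c \<in> plu_minimizers m w (R j)"
  proof -
    have "R (Suc j) = irv_step m sel w (R j)" unfolding R_def by simp
    also have "\<dots> = R j - {sel (R j) (plu_minimizers m w (R j))}" by (rule irv_step_eq)
    finally have "c = sel (R j) (plu_minimizers m w (R j))" using j by blast
    moreover have "finite (R j)" using \<open>R j \<subseteq> {1..m}\<close> by (rule finite_subset) simp
    ultimately show ?thesis using irv_step_eliminates_plu_minimizer[OF sel] j(2) by auto
  qed
  ultimately show ?thesis by (rule that)
qed

lemma IRV_elects_SCW:
  assumes "tie_rule sel" "SCW m w c"
  shows "IRV m sel w = c"
  using IRV_eliminates[OF assms(1), of c m w] SCW_not_plu_minimizer[OF assms(2)] assms(2)
  unfolding SCW_def by blast

lemma SCW_imp_not_CM_IRV: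
  assumes sel: "tie_rule sel" and scw: "SCW m w c"
  shows "\<not> CM m (IRV m sel) w"
proof
  assume "CM m (IRV m sel) w"
  then obtain Q where tot: "total m Q = total m w" and d: "IRV m sel Q \<noteq> c"
    and coalition: "\<forall>p\<in>rankings m. Q p < w p \<longrightarrow> prefers p (IRV m sel Q) c"
    unfolding CM_def IRV_elects_SCW[OF sel scw] by blast
  obtain R where R: "R \<subseteq> {1..m}" "2 \<le> card R" "IRV m sel Q \<in> R"
    and min: "c \<in> plu_minimizers m Q R"
    using IRV_eliminates[OF sel _ d] scw unfolding SCW_def by blast
  have "real (card R) * plu m Q R c \<le> total m w"
    using card_mult_plu_minimizer_le_total[OF R(1) min] tot by simp
  moreover have "plu m w R c > total m w / real (card R)"
    using scw R min unfolding SCW_def plu_minimizers_def by blast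
  then have "total m w < real (card R) * plu m w R c"
    using R(2) by (simp add: divide_less_eq mult.commute)
  ultimately have "real (card R) * plu m Q R c < real (card R) * plu m w R c" by linarith
  then have less: "plu m Q R c < plu m w R c" using R(2) by simp
  have "\<exists>p\<in>rankings m. top_in R p = c \<and> Q p < w p"
  proof (rule ccontr)
    assume "\<not> ?thesis"
    then have "plu m w R c \<le> plu m Q R c" unfolding plu_def by (intro sum_mono) auto
    then show False using less by simp
  qed
  then obtain p where p: "p \<in> rankings m" "top_in R p = c" "Q p < w p" by blast
  then show False
    using coalition top_in_not_preferred[of p R c] R(3) unfolding rankings_def by blast
qed

lemma map_transpose_rankings:
  assumes "a \<in> {1..m}" "c \<in> {1..m}" "p \<in> rankings m"
  shows "map (Transposition.transpose a c) p \<in> rankings m"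
  using assms unfolding rankings_def by (simp add: distinct_map)

lemma top_in_map_transpose:
  assumes "a \<in> K" "c \<in> K" "filter (\<lambda>x. x \<in> K) p \<noteq> []"
  shows "top_in K (map (Transposition.transpose a c) p) = Transposition.transpose a c (top_in K p)"
proof -
  have "(\<lambda>x. x \<in> K) \<circ> Transposition.transpose a c = (\<lambda>x. x \<in> K)"
    using assms(1,2) by (simp add: fun_eq_iff transpose_def)
  then show ?thesis
    using assms(3) unfolding top_in_def by (simp add: filter_map hd_map)
qed

lemma map_transpose_top_in:
  assumes "K \<subseteq> {1..m}" "a \<in> K" "c \<in> K" "p \<in> rankings m" "top_in K p = a"
  shows "map (Transposition.transpose a c) p \<in> {p \<in> rankings m. top_in K p = c}"
proof -
  have "filter (\<lambda>x. x \<in> K) p \<noteq> []"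
    using assms unfolding rankings_def by (auto simp: filter_empty_conv)
  moreover have "a \<in> {1..m}" "c \<in> {1..m}" using assms(1-3) by auto
  ultimately show ?thesis
    using assms(2-5) map_transpose_rankings[of a m c p] top_in_map_transpose[of a K c p] by simp
qed

lemma card_top_in_eq:
  assumes "K \<subseteq> {1..m}" "a \<in> K" "c \<in> K"
  shows "card {p \<in> rankings m. top_in K p = a} = card {p \<in> rankings m. top_in K p = c}"
proof -
  let ?f = "map (Transposition.transpose a c)"
  have "bij_betw ?f {p \<in> rankings m. top_in K p = a} {p \<in> rankings m. top_in K p = c}"
  proof (rule bij_betw_byWitness[where f' = ?f])
    show "?f ` {p \<in> rankings m. top_in K p = a} \<subseteq> {p \<in> rankings m. top_in K p = c}"
      using map_transpose_top_in[OF assms] by blast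
    show "?f ` {p \<in> rankings m. top_in K p = c} \<subseteq> {p \<in> rankings m. top_in K p = a}"
      using map_transpose_top_in[OF assms(1,3,2)] by (auto simp: transpose_commute)
  qed (simp_all add: map_idI)
  then show ?thesis by (rule bij_betw_same_card)
qed

lemma card_mult_card_top_in:
  assumes "K \<subseteq> {1..m}" "c \<in> K"
  shows "real (card K) * real (card {p \<in> rankings m. top_in K p = c}) = fact m"
proof -
  have "real (card K) * real (card {p \<in> rankings m. top_in K p = c})
      = (\<Sum>d\<in>K. real (card {p \<in> rankings m. top_in K p = d}))"
    using card_top_in_eq[OF assms(1) _ assms(2)] by simp
  also have "\<dots> = (\<Sum>d\<in>K. plu m (\<lambda>_. 1) K d)" unfolding plu_def by simp
  also have "\<dots> = total m (\<lambda>_. 1)" using sum_plu assms by blast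
  finally show ?thesis by (simp add: total_def card_rankings)
qed

lemma plu_ge_perturbed:
  assumes "\<forall>p\<in>rankings m. \<bar>Q p - P p\<bar> \<le> \<epsilon>"
  shows "plu m P K c - real (card {p \<in> rankings m. top_in K p = c}) * \<epsilon> \<le> plu m Q K c"
proof -
  have "plu m P K c - plu m Q K c = (\<Sum>p\<in>{p \<in> rankings m. top_in K p = c}. P p - Q p)"
    unfolding plu_def by (simp add: sum_subtractf)
  also have "\<dots> \<le> (\<Sum>p\<in>{p \<in> rankings m. top_in K p = c}. \<epsilon>)"
    using assms by (intro sum_mono) (auto simp: abs_le_iff)
  finally show ?thesis by simp
qed

lemma identity_ranking: "[1..<m+1] \<in> rankings m"
  unfolding rankings_def by auto

lemma top_in_identity_ranking:
  assumes "1 \<in> K" "1 \<le> m"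
  shows "top_in K [1..<m+1] = 1"
  using assms unfolding top_in_def by (simp add: upt_conv_Cons del: upt_Suc)

lemma sum_Phat:
  assumes "A \<subseteq> rankings m" "[1..<m+1] \<in> A"
  shows "(\<Sum>p\<in>A. Phat m \<theta> p) = real (card A) * ((1 - \<theta>) / fact m) + \<theta>"
proof -
  have "finite A" using assms(1) finite_rankings by (rule finite_subset)
  have "(\<Sum>p\<in>A. Phat m \<theta> p) = (\<Sum>p\<in>A. (1 - \<theta>) / fact m + (if p = [1..<m+1] then \<theta> else 0))"
    unfolding Phat_def by (intro sum.cong) auto
  also have "\<dots> = real (card A) * ((1 - \<theta>) / fact m) + \<theta>"
    using \<open>finite A\<close> assms(2) by (simp add: sum.distrib del: upt_Suc)
  finally show ?thesis .
qed

lemma total_Phat: "total m (Phat m \<theta>) = 1"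
  using sum_Phat[of "rankings m" m \<theta>] identity_ranking[of m]
  unfolding total_def by (simp add: card_rankings)

lemma plu_Phat:
  assumes "K \<subseteq> {1..m}" "1 \<in> K"
  shows "plu m (Phat m \<theta>) K 1 = (1 - \<theta>) / real (card K) + \<theta>"
proof -
  let ?T = "{p \<in> rankings m. top_in K p = 1}"
  have "[1..<m+1] \<in> ?T"
    using assms identity_ranking top_in_identity_ranking[of K m] by auto
  then have "plu m (Phat m \<theta>) K 1 = real (card ?T) * ((1 - \<theta>) / fact m) + \<theta>"
    unfolding plu_def by (intro sum_Phat) auto
  moreover have "card K > 0" using assms by (auto simp: card_gt_0_iff finite_subset)
  then have "real (card ?T) = fact m / real (card K)"
    using card_mult_card_top_in[OF assms] by (simp add: eq_divide_eq mult.commute)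
  ultimately show ?thesis by simp
qed

lemma SCW_near_Phat:
  assumes "1 \<le> m" "0 < \<theta>" "total m Q = 1"
    and near: "\<forall>p\<in>rankings m. \<bar>Q p - Phat m \<theta> p\<bar> \<le> \<theta> / (2 * fact m)"
  shows "SCW m Q 1"
  unfolding SCW_def
proof (intro conjI allI impI)
  show "1 \<in> {1..m}" using assms(1) by simp
  fix K assume K: "K \<subseteq> {1..m} \<and> 1 \<in> K \<and> 2 \<le> card K"
  define k where "k = real (card K)"
  have k: "k \<ge> 2" using K unfolding k_def by simp
  have "real (card {p \<in> rankings m. top_in K p = 1}) * (\<theta> / (2 * fact m)) = \<theta> / (2 * k)"
    using card_mult_card_top_in[of K m 1] K unfolding k_def by (auto simp: field_simps)
  then have "(1 - \<theta>) / k + \<theta> - \<theta> / (2 * k) \<le> plu m Q K 1"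
    using plu_ge_perturbed[OF near, of K 1] plu_Phat[of K m \<theta>] K unfolding k_def by simp
  moreover have "1 / k < (1 - \<theta>) / k + \<theta> - \<theta> / (2 * k)"
    \<comment> \<open>the margin is \<theta>(2k - 3)/(2k) > 0\<close>
    using k assms(2) by (simp add: field_simps)
  ultimately show "total m Q / real (card K) < plu m Q K 1"
    using assms(3) unfolding k_def by simp
qed

theorem mainTheorem11:
  fixes m :: nat and \<theta> :: real
  assumes "1 \<le> m" and "0 < \<theta>" and "\<theta> \<le> 1"
  shows "SCW m (Phat m \<theta>) 1 \<and>
    (\<exists>\<epsilon>>0. \<forall>Q. is_profile m Q \<and> total m Q = 1 \<and>
        (\<forall>p\<in>rankings m. \<bar>Q p - Phat m \<theta> p\<bar> < \<epsilon>) \<longrightarrow>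
          SCW m Q 1 \<and>
          (\<forall>sel. tie_rule sel \<longrightarrow> IRV m sel Q = 1 \<and> \<not> CM m (IRV m sel) Q))"
proof -
  \<comment> \<open>\<open>\<theta> \<le> 1\<close> only makes \<open>Phat\<close> nonnegative, which the argument never uses\<close>
  define \<epsilon> where "\<epsilon> = \<theta> / (2 * fact m)"
  have "\<epsilon> > 0" unfolding \<epsilon>_def using assms(2) by simp
  have near: "SCW m Q 1"
    if "total m Q = 1" "\<forall>p\<in>rankings m. \<bar>Q p - Phat m \<theta> p\<bar> \<le> \<epsilon>" for Q
    using SCW_near_Phat[OF assms(1,2)] that unfolding \<epsilon>_def by blast
  have "SCW m (Phat m \<theta>) 1"
    using near[OF total_Phat] \<open>\<epsilon> > 0\<close> by simp
  moreover have "SCW m Q 1 \<and> (\<forall>sel. tie_rule sel \<longrightarrow> IRV m sel Q = 1 \<and> \<not> CM m (IRV m sel) Q)"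
    if "total m Q = 1" "\<forall>p\<in>rankings m. \<bar>Q p - Phat m \<theta> p\<bar> < \<epsilon>" for Q
    using near[of Q] that IRV_elects_SCW SCW_imp_not_CM_IRV by (simp add: less_imp_le)
  ultimately show ?thesis using \<open>\<epsilon> > 0\<close> by blast
qed

end
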